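(* Let $Q\in\mathbb{R}^{n\times n}$ be symmetric and doubly stochastic with eigenvalues $1=\lambda_1>\lambda_2\ge\cdots\ge\lambda_n>-1$. Let $\delta\in(0,1)$ and $\gamma\in(0,1/4)$, and let $\tau\in\mathbb{N}$ satisfy $$\tau\ge\left\lceil\frac{2}{\gamma(1-\lambda_2)}\max\left\{4\ln\Big(\frac{2}{\gamma(1-\lambda_2)}\Big),\ \gamma(1-\lambda_2)-\ln\frac{\sqrt{\delta}}{4}\right\}\right\rceil.$$ Then $\|\mathbf{J}_\gamma^\tau\|^2\le\delta<1$, where $\mathbf{J}_\gamma^\tau$ is the $\tau$-fold product of $\mathbf{J}_\gamma$ with itself and $$\mathbf{J}_\gamma=\begin{bmatrix}\bar{\mathbf{I}}_n-\gamma\mathbf{Q}' & 0 & -(\bar{\mathbf{I}}_n-\gamma\mathbf{Q}')\\ 0 & \bar{\mathbf{I}}_n-\gamma\mathbf{Q}' & -\bar{\mathbf{I}}_n\\ 0&0&\bar{\mathbf{I}}_n-\gamma\mathbf{Q}'\end{bmatrix}\in\mathbb{R}^{3nd\times 3nd}.$$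
   Context: $d\in\mathbb{N}$; $\bar{\mathbf{I}}_n=(I_n-\frac1n1_n1_n^T)\otimes I_d$ and $\mathbf{Q}'=(I_n-Q)\otimes I_d$, where $1_n$ is the all-ones vector and $\otimes$ the Kronecker product. $\|\cdot\|$ is the spectral ($\ell_2$ operator) norm and $\lceil\cdot\rceil$ the ceiling function. *)

theory Defs
  imports "HOL-Analysis.Analysis" "HOL-Computational_Algebra.Polynomial"
begin

definition charpoly :: "real^'n^'n \<Rightarrow> real poly" where
  "charpoly A = det (\<chi> i j. (if i = j then [:0, 1:] else 0) - [:A $ i $ j:])"

text \<open>Kronecker product; index (i,k) of A \<otimes> B corresponds to row i of A, row k of B.\<close>
definition kron :: "real^'n^'m \<Rightarrow> real^'q^'p \<Rightarrow> real^('n \<times> 'q)^('m \<times> 'p)" where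
  "kron A B = (\<chi> r c. A $ fst r $ fst c * B $ snd r $ snd c)"

definition matpow :: "real^'n^'n \<Rightarrow> nat \<Rightarrow> real^'n^'n" where
  "matpow A k = ((\<lambda>M. A ** M) ^^ k) (mat 1)"

definition doubly_stochastic :: "real^'n^'n \<Rightarrow> bool" where
  "doubly_stochastic Q \<longleftrightarrow> (\<forall>i j. Q $ i $ j \<ge> 0) \<and>
     (\<forall>i. (\<Sum>j\<in>UNIV. Q $ i $ j) = 1) \<and> (\<forall>j. (\<Sum>i\<in>UNIV. Q $ i $ j) = 1)"

definition Ibar :: "real^('n::finite \<times> 'd::finite)^('n \<times> 'd)" where
  "Ibar = kron ((mat 1 :: real^'n^'n) - (\<chi> i j. 1 / real CARD('n))) (mat 1 :: real^'d^'d)"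

definition Qprime :: "real^'n^'n \<Rightarrow> real^('n \<times> 'd::finite)^('n \<times> 'd)" where
  "Qprime Q = kron (mat 1 - Q) (mat 1 :: real^'d^'d)"

text \<open>The 3x3 block matrix J_gamma; block index 0,1,2 of the numeral type 3.\<close>
definition Jgamma :: "real^'n^'n \<Rightarrow> real \<Rightarrow> real^(3 \<times> ('n::finite \<times> 'd::finite))^(3 \<times> ('n \<times> 'd))" where
  "Jgamma Q \<gamma> = (let M = (Ibar :: real^('n \<times> 'd)^('n \<times> 'd)) - \<gamma> *\<^sub>R Qprime Q in
     (\<chi> r c. let a = fst r; x = snd r; b = fst c; y = snd c in
        if a = 0 \<and> b = 0 then M $ x $ y
        else if a = 0 \<and> b = 2 then - M $ x $ y
        else if a = 1 \<and> b = 1 then M $ x $ y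
        else if a = 1 \<and> b = 2 then - Ibar $ x $ y
        else if a = 2 \<and> b = 2 then M $ x $ y
        else 0))"

end

theory Submission
  imports Defs
begin

(* Write M = Ibar - gamma Q'.  Since Ibar M = M Ibar = M, the (k+1)-st power of J_gamma is block
   upper triangular with diagonal blocks M^(k+1) and off-diagonal blocks -(k+1) M^(k+1) and
   -(k+1) M^k Ibar, so ||J_gamma^tau||^2 <= (3 + 2 tau^2) ||M||^(2(tau-1)).  Moreover M = A (x) I_d
   with A = C - gamma (I - Q) = ((1 - gamma) I + gamma Q) C, C the centring matrix.  On the
   complement of the all-ones vector 1 the symmetric matrix (1 - gamma) I + gamma Q has quadratic
   form between 0 (as Q >= -I) and rho = 1 - gamma (1 - lambda_2), hence norm at most rho; so
   ||M|| <= rho, and the choice of tau makes (3 + 2 tau^2) rho^(2(tau-1)) <= delta.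
   The bound x' Q x <= lambda_2 x' x on the complement of 1 avoids the spectral theorem: a maximiser
   of the Rayleigh quotient there is an eigenvector, so its eigenvalue is a root lambda_i of the
   characteristic polynomial, and it cannot be lambda_1 = 1, which is a simple root. *)

section \<open>Quadratic forms of symmetric matrices\<close>

lemma transpose_add: "transpose (A + B) = transpose A + transpose B"
  by (simp add: transpose_def vec_eq_iff)

lemma symmetric_matrix_inner:
  fixes A :: "real^'n^'n"
  assumes "transpose A = A"
  shows "x \<bullet> (A *v y) = (A *v x) \<bullet> y"
  by (metis assms dot_lmul_matrix vector_transpose_matrix)

lemma linear_coeff_zero_if_quadratic_nonpos:
  fixes b c :: real
  assumes "\<And>t. 2 * t * b + t\<^sup>2 * c \<le> 0"
  shows "b = 0"
proof -
  define k where "k = \<bar>c\<bar> + 1"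
  have "k > 0" by (simp add: k_def)
  then have "2 * (b / k) * b + (b / k)\<^sup>2 * c = (b / k)\<^sup>2 * (2 * k + c)"
    by (simp add: power2_eq_square field_simps)
  moreover have "2 * k + c > 0" by (simp add: k_def)
  ultimately have "(b / k)\<^sup>2 \<le> 0"
    using assms[of "b / k"] by (simp add: mult_le_0_iff)
  then show ?thesis using \<open>k > 0\<close> by simp
qed

lemma max_quadratic_form_eigenvector:
  fixes A :: "real^'n^'n"
  assumes sym: "transpose A = A" and S: "subspace S" "S \<noteq> {0}"
    and inv: "\<And>x. x \<in> S \<Longrightarrow> A *v x \<in> S"
  obtains x \<mu> where "x \<in> S" "x \<noteq> 0" "A *v x = \<mu> *\<^sub>R x"
    "\<And>y. y \<in> S \<Longrightarrow> y \<bullet> (A *v y) \<le> \<mu> * (y \<bullet> y)"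
proof -
  define f where "f y = y \<bullet> (A *v y)" for y
  define K where "K = sphere 0 1 \<inter> S"
  have cK: "compact K"
    unfolding K_def by (intro compact_Int_closed compact_sphere closed_subspace S)
  obtain w where "w \<in> S" "w \<noteq> 0" using S subspace_0 by blast
  then have "w /\<^sub>R norm w \<in> K" by (simp add: K_def subspace_scale S)
  then have neK: "K \<noteq> {}" by blast
  have "continuous_on K f" unfolding f_def by (intro continuous_intros)
  then obtain x where xK: "x \<in> K" and xmax: "\<And>y. y \<in> K \<Longrightarrow> f y \<le> f x"
    using continuous_attains_sup[OF cK neK] by blast
  define \<mu> where "\<mu> = f x"
  have xS: "x \<in> S" and xx: "x \<bullet> x = 1" using xK by (auto simp: K_def dot_square_norm)
  have bound: "f y \<le> \<mu> * (y \<bullet> y)" if "y \<in> S" for y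
  proof (cases "y = 0")
    case False
    then have "y /\<^sub>R norm y \<in> K" using that by (simp add: K_def subspace_scale S)
    then have "f (y /\<^sub>R norm y) \<le> \<mu>" using xmax \<mu>_def by blast
    moreover have "f (y /\<^sub>R norm y) = f y / (y \<bullet> y)"
      by (simp add: f_def matrix_vector_mult_scaleR dot_square_norm power2_eq_square field_simps)
    ultimately show ?thesis using False by (simp add: divide_le_eq)
  qed (simp add: f_def)
  define r where "r = A *v x - \<mu> *\<^sub>R x"
  have rS: "r \<in> S" unfolding r_def by (intro subspace_diff subspace_scale inv xS S)
  \<comment> \<open>First-order optimality: the directional derivative of \<open>f - \<mu> (\<cdot> \<bullet> \<cdot>)\<close> at \<open>x\<close> vanishes along \<open>S\<close>.\<close>
  have "z \<bullet> r = 0" if zS: "z \<in> S" for z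
  proof (rule linear_coeff_zero_if_quadratic_nonpos)
    fix t
    have "x + t *\<^sub>R z \<in> S" by (intro subspace_add subspace_scale xS zS S)
    then have le: "f (x + t *\<^sub>R z) \<le> \<mu> * ((x + t *\<^sub>R z) \<bullet> (x + t *\<^sub>R z))" by (rule bound)
    have sxz: "x \<bullet> (A *v z) = z \<bullet> (A *v x)"
      using symmetric_matrix_inner[OF sym] by (simp add: inner_commute)
    have "f (x + t *\<^sub>R z) = \<mu> + 2 * t * (z \<bullet> (A *v x)) + t\<^sup>2 * f z"
      using sxz by (simp add: f_def \<mu>_def power2_eq_square algebra_simps)
    moreover have "(x + t *\<^sub>R z) \<bullet> (x + t *\<^sub>R z) = 1 + 2 * t * (z \<bullet> x) + t\<^sup>2 * (z \<bullet> z)"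
      using xx by (simp add: inner_commute[of x z] power2_eq_square algebra_simps)
    ultimately have "\<mu> + 2 * t * (z \<bullet> (A *v x)) + t\<^sup>2 * f z
        \<le> \<mu> * (1 + 2 * t * (z \<bullet> x) + t\<^sup>2 * (z \<bullet> z))"
      using le by simp
    then show "2 * t * (z \<bullet> r) + t\<^sup>2 * (f z - \<mu> * (z \<bullet> z)) \<le> 0"
      by (simp add: r_def algebra_simps)
  qed
  then have "r \<bullet> r = 0" using rS .
  then have "r = 0" by simp
  moreover have "x \<noteq> 0" using xx by auto
  ultimately show ?thesis
    using that[of x \<mu>] xS bound by (simp add: r_def f_def)
qed

lemma norm_le_of_quadratic_form_bounds:
  fixes B :: "real^'n^'n"
  assumes sym: "transpose B = B" and S: "subspace S" and inv: "\<And>x. x \<in> S \<Longrightarrow> B *v x \<in> S"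
    and lower: "\<And>u. u \<in> S \<Longrightarrow> 0 \<le> u \<bullet> (B *v u)"
    and upper: "\<And>u. u \<in> S \<Longrightarrow> u \<bullet> (B *v u) \<le> \<rho> * (u \<bullet> u)"
    and y: "y \<in> S"
  shows "norm (B *v y) \<le> \<rho> * norm y"
proof (cases "y = 0")
  case False
  define z where "z = B *v y"
  have zS: "z \<in> S" unfolding z_def using y by (rule inv)
  have yBz: "y \<bullet> (B *v z) = z \<bullet> z"
    using symmetric_matrix_inner[OF sym] by (simp add: z_def inner_commute)
  \<comment> \<open>Cauchy-Schwarz for the form: positivity on \<open>z - s y\<close>, later with \<open>s = norm z / norm y\<close>.\<close>
  have key: "2 * s * (z \<bullet> z) \<le> \<rho> * (z \<bullet> z) + s\<^sup>2 * (\<rho> * (y \<bullet> y))" for s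
  proof -
    have "z - s *\<^sub>R y \<in> S" by (intro subspace_diff subspace_scale zS y S)
    then have "0 \<le> (z - s *\<^sub>R y) \<bullet> (B *v (z - s *\<^sub>R y))" by (rule lower)
    also have "\<dots> = z \<bullet> (B *v z) - 2 * s * (z \<bullet> z) + s\<^sup>2 * (y \<bullet> (B *v y))"
      using yBz by (simp add: z_def[symmetric] inner_commute[of y z] power2_eq_square algebra_simps)
    finally show ?thesis
      using upper[OF zS] mult_left_mono[OF upper[OF y], of "s\<^sup>2"] by simp
  qed
  have "y \<bullet> y > 0" using False by simp
  moreover have "0 \<le> \<rho> * (y \<bullet> y)" using lower[OF y] upper[OF y] by (rule order_trans)
  ultimately have \<rho>: "0 \<le> \<rho>" using mult_neg_pos[of \<rho> "y \<bullet> y"] by linarith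
  show ?thesis
  proof (cases "z = 0")
    case False
    define s where "s = norm z / norm y"
    have "2 * s * (norm z)\<^sup>2 \<le> 2 * \<rho> * (norm z)\<^sup>2"
      using key[of s] \<open>y \<noteq> 0\<close> by (simp add: s_def dot_square_norm power_divide)
    then have "s \<le> \<rho>" using False by simp
    then show ?thesis using \<open>y \<noteq> 0\<close> by (simp add: s_def z_def divide_le_eq)
  qed (use \<rho> in \<open>simp add: z_def\<close>)
qed (simp)

section \<open>Characteristic polynomials\<close>

definition const_poly_matrix :: "'a::zero^'m^'n \<Rightarrow> 'a poly^'m^'n" where
  "const_poly_matrix A = (\<chi> i j. [:A $ i $ j:])"

lemma const_poly_sum: "[:sum f A:] = (\<Sum>x\<in>A. [:f x:])"
proof (induction A rule: infinite_finite_induct)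
  case (insert x F)
  have "[:f x + sum f F:] = [:f x:] + [:sum f F:]" by simp
  with insert show ?case by simp
qed simp_all

lemma const_poly_matrix_mult:
  "const_poly_matrix (A ** B) = const_poly_matrix A ** const_poly_matrix (B :: 'a::comm_semiring_1^_^_)"
  by (simp add: const_poly_matrix_def matrix_matrix_mult_def vec_eq_iff const_poly_sum mult.commute)

lemma const_poly_matrix_mat: "const_poly_matrix (mat c) = mat [:c:]"
  by (simp add: const_poly_matrix_def mat_def vec_eq_iff)

lemma mat_mult_commute: "mat c ** A = A ** (mat c :: 'a::comm_semiring_1^'n^'n)"
  by (simp add: matrix_matrix_mult_def mat_def vec_eq_iff if_distrib if_distribR mult.commute
      cong: if_cong)

lemma matrix_diff_ldistrib: "A ** (B - C) = A ** B - A ** (C :: 'a::ring_1^_^_)"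
  by (simp add: matrix_matrix_mult_def vec_eq_iff sum_subtractf algebra_simps)

lemma matrix_diff_rdistrib: "(B - C) ** A = B ** A - C ** (A :: 'a::ring_1^_^_)"
  by (simp add: matrix_matrix_mult_def vec_eq_iff sum_subtractf algebra_simps)

lemma mat_vector_mult: "mat c *v x = c *\<^sub>R (x :: real^'n)"
proof -
  have "mat c = c *\<^sub>R (mat 1 :: real^'n^'n)" by (simp add: mat_def vec_eq_iff)
  then show ?thesis by (simp flip: scaleR_matrix_vector_assoc)
qed

lemma charpoly_eq_det: "charpoly A = det (mat [:0, 1:] - const_poly_matrix A)"
  unfolding charpoly_def const_poly_matrix_def
  by (rule arg_cong[where f = det]) (simp add: vec_eq_iff mat_def)

lemma poly_charpoly: "poly (charpoly A) \<mu> = det (mat \<mu> - A)"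
  unfolding charpoly_def det_def
  by (auto simp: poly_sum poly_prod mat_def intro!: sum.cong prod.cong)

lemma charpoly_eigenvalue_root:
  fixes A :: "real^'n^'n"
  assumes "A *v x = \<mu> *\<^sub>R x" "x \<noteq> 0"
  shows "poly (charpoly A) \<mu> = 0"
proof -
  have "(mat \<mu> - A) *v x = 0"
    using assms(1) by (simp add: matrix_vector_mult_diff_rdistrib mat_vector_mult)
  then have "\<not> invertible (mat \<mu> - A)"
    using assms(2) matrix_left_invertible_ker invertible_def by blast
  then show ?thesis by (simp add: poly_charpoly invertible_det_nz)
qed

lemma charpoly_similar:
  fixes A P P' :: "real^'n^'n"
  assumes "P' ** P = mat 1"
  shows "charpoly (P' ** A ** P) = charpoly A"
proof -
  let ?X = "mat [:0, 1:] :: real poly^'n^'n" and ?c = const_poly_matrix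
  have "?c P' ** (?X - ?c A) ** ?c P = ?X ** (?c P' ** ?c P) - ?c (P' ** A ** P)"
    by (simp add: matrix_diff_ldistrib matrix_diff_rdistrib const_poly_matrix_mult
        matrix_mul_assoc mat_mult_commute)
  also have "\<dots> = ?X - ?c (P' ** A ** P)"
    using assms by (simp flip: const_poly_matrix_mult one_pCons add: const_poly_matrix_mat)
  finally have "charpoly (P' ** A ** P) = det (?c P' ** (?X - ?c A) ** ?c P)"
    by (simp add: charpoly_eq_det)
  then have "charpoly (P' ** A ** P) = det (?c P') * det (?X - ?c A) * det (?c P)"
    by (simp add: det_mul)
  moreover have "det (?c P') * det (?c P) = 1"
    using assms by (metis det_I det_mul const_poly_matrix_mult const_poly_matrix_mat pCons_one)
  ultimately show ?thesis by (simp add: charpoly_eq_det)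
qed

lemma det_dvd_two_scaled_unit_columns:
  fixes N :: "'a::comm_ring_1^'n^'n"
  assumes "a \<noteq> b"
    and "\<And>i. N $ i $ a = (if i = a then p else 0)"
    and "\<And>i. N $ i $ b = (if i = b then p else 0)"
  shows "p\<^sup>2 dvd det N"
proof -
  define T where "T = transpose N"
  have T: "T = (\<chi> i. if i = a then p *s axis a 1 else if i = b then p *s axis b 1 else T $ i)"
    using assms by (auto simp: T_def transpose_def vec_eq_iff axis_def)
  have "det T = p * det (\<chi> i. if i = a then axis a 1 else if i = b then p *s axis b 1 else T $ i)"
    by (subst T, rule det_row_mul)
  also have "(\<chi> i. if i = a then axis a 1 else if i = b then p *s axis b 1 else T $ i)
      = (\<chi> i. if i = b then p *s axis b 1 else if i = a then axis a 1 else T $ i)"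
    using assms(1) by (auto simp: vec_eq_iff)
  also have "det \<dots> = p * det (\<chi> i. if i = b then axis b 1 else if i = a then axis a 1 else T $ i)"
    by (rule det_row_mul)
  finally have "det N = p\<^sup>2 * det (\<chi> i. if i = b then axis b 1 else if i = a then axis a 1 else T $ i)"
    by (simp add: T_def power2_eq_square)
  then show ?thesis by simp
qed

lemma independent_pair_columns_invertible:
  fixes u v :: "real^'n"
  assumes ind: "independent {u, v}" and "u \<noteq> v"
  obtains P P' :: "real^'n^'n" and a b
  where "a \<noteq> b" "column a P = u" "column b P = v" "P' ** P = mat 1"
proof -
  obtain B where BS: "{u, v} \<subseteq> B" and Bi: "independent B" and Bsp: "UNIV \<subseteq> span B"
    by (rule maximal_independent_subset_extend[of "{u, v}" UNIV, OF _ ind]) auto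
  have "card B = dim (UNIV :: (real^'n) set)"
    by (rule basis_card_eq_dim) (use Bi Bsp in auto)
  moreover have "finite B" using Bi independent_bound by blast
  ultimately obtain g where g: "bij_betw g (UNIV :: 'n set) B"
    using finite_same_card_bij[of "UNIV :: 'n set" B] by auto
  define P :: "real^'n^'n" where "P = (\<chi> i j. g j $ i)"
  have col: "column j P = g j" for j by (simp add: P_def column_def vec_eq_iff)
  have "columns P = B"
    using g by (auto simp: columns_def col bij_betw_def)
  then have "span (columns P) = UNIV" using Bsp by auto
  then have "\<exists>P'. P ** P' = mat 1"
    by (simp add: matrix_right_invertible_span_columns span_vec_eq)
  then obtain P' where "P' ** P = mat 1" using matrix_left_right_inverse by blast
  moreover obtain a b where "g a = u" "g b = v"
    using g BS unfolding bij_betw_def by blast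
  ultimately show ?thesis using that[of a b P P'] \<open>u \<noteq> v\<close> by (auto simp: col)
qed

lemma column_matrix_mult: "column k (A ** B) = A *v column k B"
  by (simp add: column_def matrix_matrix_mult_def matrix_vector_mult_def vec_eq_iff)

lemma square_dvd_charpoly_if_independent_eigenvectors:
  fixes A :: "real^'n^'n"
  assumes "independent {u, v}" "u \<noteq> v" and Au: "A *v u = c *\<^sub>R u" and Av: "A *v v = c *\<^sub>R v"
  shows "[:-c, 1:]\<^sup>2 dvd charpoly A"
proof -
  obtain P P' :: "real^'n^'n" and a b
    where ab: "a \<noteq> b" and Pa: "column a P = u" and Pb: "column b P = v" and P': "P' ** P = mat 1"
    by (rule independent_pair_columns_invertible[OF assms(1,2)])
  define D where "D = P' ** A ** P"
  have D_col: "D $ i $ k = (if i = k then c else 0)" if "A *v column k P = c *\<^sub>R column k P" for i k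
  proof -
    have "column k D = c *\<^sub>R column k (P' ** P)"
      using that by (simp add: D_def column_matrix_mult matrix_vector_mult_scaleR
          flip: matrix_mul_assoc matrix_vector_mul_assoc)
    then show ?thesis using P' by (simp add: column_def vec_eq_iff mat_def)
  qed
  have "[:-c, 1:]\<^sup>2 dvd det (mat [:0, 1:] - const_poly_matrix D)"
    by (rule det_dvd_two_scaled_unit_columns[OF ab])
      (use D_col[where k = a] D_col[where k = b] Pa Pb Au Av in \<open>simp_all add: const_poly_matrix_def mat_def\<close>)
  then show ?thesis
    using charpoly_similar[OF P', of A] by (simp add: D_def charpoly_eq_det)
qed

lemma square_not_dvd_prod_linear_at_simple_root:
  fixes lam :: "nat \<Rightarrow> real"
  assumes "0 < n" and simple: "\<And>i. 0 < i \<Longrightarrow> i < n \<Longrightarrow> lam i \<noteq> lam 0"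
  shows "\<not> [:-lam 0, 1:]\<^sup>2 dvd (\<Prod>i<n. [:-lam i, 1:])"
proof
  define R where "R = (\<Prod>i\<in>{1..<n}. [:-lam i, 1:])"
  have "{..<n} = insert 0 {1..<n}" using \<open>0 < n\<close> by auto
  then have split: "(\<Prod>i<n. [:-lam i, 1:]) = [:-lam 0, 1:] * R" by (simp add: R_def)
  assume "[:-lam 0, 1:]\<^sup>2 dvd (\<Prod>i<n. [:-lam i, 1:])"
  then have "[:-lam 0, 1:] * [:-lam 0, 1:] dvd [:-lam 0, 1:] * R"
    by (simp only: split power2_eq_square)
  then have "[:-lam 0, 1:] dvd R" by (subst (asm) dvd_mult_cancel_left) auto
  then have "poly R (lam 0) = 0" by (simp add: poly_eq_0_iff_dvd)
  moreover have "poly R (lam 0) \<noteq> 0"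
  proof -
    have "lam 0 \<noteq> lam i" if "i \<in> {1..<n}" for i
      using simple[of i] that by auto
    then show ?thesis by (simp add: R_def poly_prod)
  qed
  ultimately show False by contradiction
qed

section \<open>Doubly stochastic matrices\<close>

lemma doubly_stochastic_mult_one:
  assumes "doubly_stochastic Q"
  shows "Q *v 1 = 1"
  using assms by (simp add: doubly_stochastic_def matrix_vector_mult_def vec_eq_iff)

lemma doubly_stochastic_inner_one:
  assumes "doubly_stochastic (Q :: real^'n^'n)"
  shows "1 \<bullet> (Q *v x) = 1 \<bullet> x"
proof -
  have "1 \<bullet> (Q *v x) = (\<Sum>j\<in>UNIV. (\<Sum>i\<in>UNIV. Q $ i $ j) * x $ j)"
    by (simp add: inner_vec_def matrix_vector_mult_def sum_distrib_right) (rule sum.swap)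
  then show ?thesis using assms by (simp add: doubly_stochastic_def inner_vec_def)
qed

lemma doubly_stochastic_quadratic_form_ge:
  assumes "doubly_stochastic (Q :: real^'n^'n)"
  shows "- (x \<bullet> x) \<le> x \<bullet> (Q *v x)"
proof -
  have rows: "\<And>i. (\<Sum>j\<in>UNIV. Q $ i $ j) = 1" and cols: "\<And>j. (\<Sum>i\<in>UNIV. Q $ i $ j) = 1"
    and nonneg: "\<And>i j. Q $ i $ j \<ge> 0" using assms unfolding doubly_stochastic_def by auto
  have sq_i: "x \<bullet> x = (\<Sum>i\<in>UNIV. \<Sum>j\<in>UNIV. Q $ i $ j * (x $ i)\<^sup>2)"
    by (simp add: inner_vec_def power2_eq_square rows flip: sum_distrib_right)
  have sq_j: "x \<bullet> x = (\<Sum>i\<in>UNIV. \<Sum>j\<in>UNIV. Q $ i $ j * (x $ j)\<^sup>2)"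
    by (subst sum.swap) (simp add: inner_vec_def power2_eq_square cols flip: sum_distrib_right)
  have form: "x \<bullet> (Q *v x) = (\<Sum>i\<in>UNIV. \<Sum>j\<in>UNIV. Q $ i $ j * (x $ i * x $ j))"
    by (simp add: inner_vec_def matrix_vector_mult_def sum_distrib_left algebra_simps)
  have "0 \<le> (\<Sum>i\<in>UNIV. \<Sum>j\<in>UNIV. Q $ i $ j * (x $ i + x $ j)\<^sup>2)"
    by (intro sum_nonneg mult_nonneg_nonneg nonneg) auto
  also have "\<dots> = (\<Sum>i\<in>UNIV. \<Sum>j\<in>UNIV. Q $ i $ j * (x $ i)\<^sup>2)
      + (\<Sum>i\<in>UNIV. \<Sum>j\<in>UNIV. Q $ i $ j * (x $ j)\<^sup>2)
      + 2 * (\<Sum>i\<in>UNIV. \<Sum>j\<in>UNIV. Q $ i $ j * (x $ i * x $ j))"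
    by (simp add: sum.distrib sum_distrib_left power2_eq_square algebra_simps)
  finally show ?thesis using sq_i sq_j form by linarith
qed

lemma exists_nonzero_orthogonal_one:
  assumes "CARD('n) \<ge> 2"
  obtains w :: "real^'n" where "w \<noteq> 0" "1 \<bullet> w = 0"
proof -
  have "\<not> card (UNIV :: 'n set) \<le> Suc 0" using assms by simp
  then obtain a b :: 'n where "a \<noteq> b" using card_le_Suc0_iff_eq[of "UNIV :: 'n set"] by auto
  then have "axis a 1 - axis b 1 \<noteq> (0 :: real^'n)"
    by (simp add: axis_eq_axis)
  moreover have "1 \<bullet> (axis a 1 - axis b 1 :: real^'n) = 0"
    by (simp add: inner_diff_right inner_axis)
  ultimately show ?thesis by (rule that)
qed

lemma doubly_stochastic_quadratic_form_le_second_eigenvalue: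
  fixes Q :: "real^'n^'n" and lam :: "nat \<Rightarrow> real"
  assumes n2: "CARD('n) \<ge> 2"
    and sym: "transpose Q = Q"
    and ds: "doubly_stochastic Q"
    and eig: "charpoly Q = (\<Prod>i<CARD('n). [:- lam i, 1:])"
    and l1: "lam 0 = 1" and l12: "lam 0 > lam 1"
    and lsorted: "\<And>i j. 1 \<le> i \<Longrightarrow> i \<le> j \<Longrightarrow> j < CARD('n) \<Longrightarrow> lam j \<le> lam i"
    and u: "1 \<bullet> u = 0"
  shows "u \<bullet> (Q *v u) \<le> lam 1 * (u \<bullet> u)"
proof -
  let ?S = "{x :: real^'n. 1 \<bullet> x = 0}"
  obtain w :: "real^'n" where "w \<noteq> 0" "1 \<bullet> w = 0" using exists_nonzero_orthogonal_one[OF n2] .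
  then have "?S \<noteq> {0}" by blast
  moreover have "\<And>x. x \<in> ?S \<Longrightarrow> Q *v x \<in> ?S" by (simp add: doubly_stochastic_inner_one[OF ds])
  ultimately obtain x \<mu> where "x \<in> ?S" "x \<noteq> 0" and Qx: "Q *v x = \<mu> *\<^sub>R x"
    and max: "\<And>y. y \<in> ?S \<Longrightarrow> y \<bullet> (Q *v y) \<le> \<mu> * (y \<bullet> y)"
    using max_quadratic_form_eigenvector[OF sym subspace_hyperplane] by metis
  then have x: "1 \<bullet> x = 0" "x \<noteq> 0" by simp_all
  have "poly (charpoly Q) \<mu> = 0" using Qx x(2) by (rule charpoly_eigenvalue_root)
  then obtain i where i: "i < CARD('n)" "\<mu> = lam i" by (auto simp: eig poly_prod)
  have "i \<noteq> 0"
  proof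
    assume "i = 0"
    \<comment> \<open>Then \<open>1\<close> and \<open>x\<close> are orthogonal eigenvectors for the simple eigenvalue \<open>lam 0 = 1\<close>.\<close>
    have "independent {1, x}"
      by (rule pairwise_orthogonal_independent)
        (use x in \<open>auto simp: pairwise_insert orthogonal_def inner_commute\<close>)
    moreover have "1 \<noteq> x" using x n2 by (auto simp: inner_vec_def)
    moreover have "Q *v 1 = lam 0 *\<^sub>R 1" using doubly_stochastic_mult_one[OF ds] l1 by simp
    moreover have "Q *v x = lam 0 *\<^sub>R x" using Qx i \<open>i = 0\<close> by simp
    ultimately have "[:-lam 0, 1:]\<^sup>2 dvd charpoly Q"
      by (rule square_dvd_charpoly_if_independent_eigenvectors)
    moreover have "lam j \<noteq> lam 0" if "0 < j" "j < CARD('n)" for j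
      using lsorted[of 1 j] that l12 by (simp add: Suc_le_eq)
    ultimately show False
      using square_not_dvd_prod_linear_at_simple_root[of "CARD('n)" lam] eig by simp
  qed
  then have "\<mu> \<le> lam 1" using lsorted[of 1 i] i by simp
  then have "\<mu> * (u \<bullet> u) \<le> lam 1 * (u \<bullet> u)" by (simp add: mult_right_mono)
  then show ?thesis using max[of u] u by simp
qed

section \<open>The centred mixing matrix\<close>

definition centering_matrix :: "real^'n^'n" where
  "centering_matrix = mat 1 - (\<chi> i j. 1 / real CARD('n))"

lemma centering_matrix_mult: "centering_matrix *v y = y - ((1 \<bullet> y) / real CARD('n)) *\<^sub>R (1 :: real^'n)"
proof -
  have "(\<chi> i j. 1 / real CARD('n)) *v y = ((1 \<bullet> y) / real CARD('n)) *\<^sub>R (1 :: real^'n)"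
    by (simp add: vec_eq_iff matrix_vector_mult_def inner_vec_def sum_divide_distrib)
  then show ?thesis by (simp add: centering_matrix_def matrix_vector_mult_diff_rdistrib)
qed

lemma inner_one_one: "1 \<bullet> (1 :: real^'n) = real CARD('n)"
  by (simp add: inner_vec_def)

lemma inner_one_centering_matrix: "1 \<bullet> (centering_matrix *v (y :: real^'n)) = 0"
  by (simp add: centering_matrix_mult inner_diff_right inner_one_one)

lemma centering_matrix_fixes: "1 \<bullet> y = 0 \<Longrightarrow> centering_matrix *v y = (y :: real^'n)"
  by (simp add: centering_matrix_mult)

lemma norm_centering_matrix_le: "norm (centering_matrix *v y) \<le> norm (y :: real^'n)"
proof -
  define m where "m = (1 \<bullet> y) / real CARD('n)"
  have "y = centering_matrix *v y + m *\<^sub>R 1" by (simp add: centering_matrix_mult m_def)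
  moreover have "orthogonal (centering_matrix *v y) (m *\<^sub>R 1)"
    using inner_one_centering_matrix[of y] by (simp add: orthogonal_def inner_commute)
  ultimately have "(norm y)\<^sup>2 = (norm (centering_matrix *v y))\<^sup>2 + (norm (m *\<^sub>R (1 :: real^'n)))\<^sup>2"
    by (metis norm_add_Pythagorean)
  then have "(norm (centering_matrix *v y))\<^sup>2 \<le> (norm y)\<^sup>2" by simp
  then show ?thesis by (rule power2_le_imp_le) simp
qed

definition mixing_matrix :: "real^'n^'n \<Rightarrow> real \<Rightarrow> real^'n^'n" where
  "mixing_matrix Q \<gamma> = centering_matrix - \<gamma> *\<^sub>R (mat 1 - Q)"

lemma mixing_matrix_mult:
  assumes "doubly_stochastic Q"
  shows "mixing_matrix Q \<gamma> *v y
    = (1 - \<gamma>) *\<^sub>R (centering_matrix *v y) + \<gamma> *\<^sub>R (Q *v (centering_matrix *v (y :: real^'n)))"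
proof -
  define m where "m = (1 \<bullet> y) / real CARD('n)"
  have C: "centering_matrix *v y = y - m *\<^sub>R 1" by (simp add: centering_matrix_mult m_def)
  have "mixing_matrix Q \<gamma> *v y = centering_matrix *v y - \<gamma> *\<^sub>R (y - Q *v y)"
    by (simp add: mixing_matrix_def matrix_vector_mult_diff_rdistrib flip: scaleR_matrix_vector_assoc)
  then show ?thesis using doubly_stochastic_mult_one[OF assms] by (simp add: C algebra_simps)
qed

lemma centering_mixing_matrix:
  assumes "doubly_stochastic Q"
  shows "centering_matrix ** mixing_matrix Q \<gamma> = mixing_matrix Q \<gamma>"
proof -
  have "1 \<bullet> (mixing_matrix Q \<gamma> *v y) = 0" for y
    by (simp add: mixing_matrix_mult[OF assms] inner_add_right inner_one_centering_matrix
        doubly_stochastic_inner_one[OF assms])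
  then show ?thesis by (simp add: matrix_eq centering_matrix_fixes flip: matrix_vector_mul_assoc)
qed

lemma mixing_centering_matrix:
  assumes "doubly_stochastic Q"
  shows "mixing_matrix Q \<gamma> ** centering_matrix = mixing_matrix Q \<gamma>"
  by (simp add: matrix_eq mixing_matrix_mult[OF assms] centering_matrix_fixes
      inner_one_centering_matrix flip: matrix_vector_mul_assoc)

lemma norm_mixing_matrix_le:
  fixes Q :: "real^'n^'n" and lam :: "nat \<Rightarrow> real"
  assumes n2: "CARD('n) \<ge> 2"
    and sym: "transpose Q = Q"
    and ds: "doubly_stochastic Q"
    and eig: "charpoly Q = (\<Prod>i<CARD('n). [:- lam i, 1:])"
    and l1: "lam 0 = 1" and l12: "lam 0 > lam 1"
    and lsorted: "\<And>i j. 1 \<le> i \<Longrightarrow> i \<le> j \<Longrightarrow> j < CARD('n) \<Longrightarrow> lam j \<le> lam i"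
    and \<gamma>: "0 \<le> \<gamma>" "\<gamma> \<le> 1/2" and lam1: "lam 1 \<ge> -1"
  shows "norm (mixing_matrix Q \<gamma> *v y) \<le> (1 - \<gamma> * (1 - lam 1)) * norm y"
proof -
  let ?\<rho> = "1 - \<gamma> * (1 - lam 1)" and ?S = "{x :: real^'n. 1 \<bullet> x = 0}"
  define B where "B = (1 - \<gamma>) *\<^sub>R mat 1 + \<gamma> *\<^sub>R Q"
  have B: "B *v x = (1 - \<gamma>) *\<^sub>R x + \<gamma> *\<^sub>R (Q *v x)" for x
    by (simp add: B_def matrix_vector_mult_add_rdistrib flip: scaleR_matrix_vector_assoc)
  have form: "x \<bullet> (B *v x) = (1 - \<gamma>) * (x \<bullet> x) + \<gamma> * (x \<bullet> (Q *v x))" for x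
    by (simp add: B inner_add_right)
  have "transpose B = B" using sym by (simp add: B_def transpose_add transpose_scalar)
  moreover have "x \<in> ?S \<Longrightarrow> B *v x \<in> ?S" for x
    by (simp add: B inner_add_right doubly_stochastic_inner_one[OF ds])
  moreover have "0 \<le> x \<bullet> (B *v x)" for x
  proof -
    have "\<gamma> * (- (x \<bullet> x)) \<le> \<gamma> * (x \<bullet> (Q *v x))"
      by (rule mult_left_mono[OF doubly_stochastic_quadratic_form_ge[OF ds] \<gamma>(1)])
    moreover have "0 \<le> (1 - 2 * \<gamma>) * (x \<bullet> x)" using \<gamma> by simp
    ultimately show ?thesis by (simp add: form algebra_simps)
  qed
  moreover have "x \<bullet> (B *v x) \<le> ?\<rho> * (x \<bullet> x)" if "x \<in> ?S" for x
  proof -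
    have "x \<bullet> (Q *v x) \<le> lam 1 * (x \<bullet> x)"
      using that by (intro doubly_stochastic_quadratic_form_le_second_eigenvalue[OF n2 sym ds eig l1 l12 lsorted]) auto
    then have "\<gamma> * (x \<bullet> (Q *v x)) \<le> \<gamma> * (lam 1 * (x \<bullet> x))" using \<gamma>(1) by (rule mult_left_mono)
    then show ?thesis by (simp add: form algebra_simps)
  qed
  ultimately have "norm (B *v (centering_matrix *v y)) \<le> ?\<rho> * norm (centering_matrix *v y)"
    by (intro norm_le_of_quadratic_form_bounds[OF _ subspace_hyperplane])
      (auto simp: inner_one_centering_matrix)
  also have "\<dots> \<le> ?\<rho> * norm y"
  proof (rule mult_left_mono[OF norm_centering_matrix_le])
    have "\<gamma> * (1 - lam 1) \<le> 1/2 * 2" using \<gamma> lam1 l1 l12 by (intro mult_mono) auto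
    then show "0 \<le> ?\<rho>" by simp
  qed
  finally show ?thesis by (simp add: B mixing_matrix_mult[OF ds])
qed

section \<open>Kronecker products with the identity\<close>

lemma sum_UNIV_prod: "(\<Sum>p\<in>UNIV. f p) = (\<Sum>i\<in>UNIV. \<Sum>k\<in>UNIV. f (i, k))"
  by (simp add: sum.cartesian_product)

lemma kron_mult: "kron A B ** kron C D = kron (A ** C) (B ** D)"
  by (simp add: kron_def matrix_matrix_mult_def vec_eq_iff sum_UNIV_prod sum_product mult_ac)

lemma kron_diff_left: "kron (A - B) C = kron A C - kron B C"
  by (simp add: kron_def vec_eq_iff left_diff_distrib)

lemma kron_scaleR_left: "kron (c *\<^sub>R A) B = c *\<^sub>R kron A B"
  by (simp add: kron_def vec_eq_iff)

definition slice :: "'d::finite \<Rightarrow> real^('n \<times> 'd) \<Rightarrow> real^'n" where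
  "slice k v = (\<chi> i. v $ (i, k))"

lemma slice_kron_mat_one: "slice k (kron K (mat 1 :: real^'d^'d) *v v) = K *v slice k v"
proof -
  have "K $ i $ j * (mat 1 :: real^'d^'d) $ k $ l * v $ (j, l) = (if l = k then K $ i $ j * v $ (j, k) else 0)"
    for i j l by (auto simp: mat_def)
  then show ?thesis
    by (simp add: slice_def vec_eq_iff matrix_vector_mult_def kron_def sum_UNIV_prod)
qed

lemma inner_eq_sum_slices: "v \<bullet> w = (\<Sum>k\<in>UNIV. slice k v \<bullet> slice k w)"
  unfolding inner_vec_def slice_def sum_UNIV_prod by (simp, rule sum.swap)

lemma norm_kron_mat_one_le:
  assumes K: "\<And>y. norm (K *v y) \<le> c * norm y" and c: "0 \<le> c"
  shows "norm (kron K (mat 1 :: real^'d^'d) *v v) \<le> c * norm v"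
proof -
  have "(norm (kron K (mat 1 :: real^'d^'d) *v v))\<^sup>2 = (\<Sum>k\<in>UNIV. (norm (K *v slice k v))\<^sup>2)"
    by (simp add: power2_norm_eq_inner inner_eq_sum_slices[of "kron K (mat 1) *v v"] slice_kron_mat_one)
  also have "\<dots> \<le> (\<Sum>k\<in>UNIV. (c * norm (slice k v))\<^sup>2)"
    using K c by (intro sum_mono power_mono) auto
  also have "\<dots> = (c * norm v)\<^sup>2"
    by (simp add: power_mult_distrib sum_distrib_left power2_norm_eq_inner inner_eq_sum_slices[of v])
  finally show ?thesis using c by (rule power2_le_imp_le[OF _ mult_nonneg_nonneg]) simp
qed

lemma Ibar_eq_kron: "Ibar = kron centering_matrix (mat 1)"
  by (simp add: Ibar_def centering_matrix_def)

lemma Ibar_minus_Qprime_eq_kron: "Ibar - \<gamma> *\<^sub>R Qprime Q = kron (mixing_matrix Q \<gamma>) (mat 1)"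
  by (simp add: Ibar_eq_kron Qprime_def mixing_matrix_def kron_diff_left kron_scaleR_left)

lemma Ibar_absorbs_Ibar_minus_Qprime:
  assumes "doubly_stochastic Q"
  shows "Ibar ** (Ibar - \<gamma> *\<^sub>R Qprime Q) = Ibar - \<gamma> *\<^sub>R Qprime Q"
    and "(Ibar - \<gamma> *\<^sub>R Qprime Q) ** Ibar = Ibar - \<gamma> *\<^sub>R Qprime Q"
  unfolding Ibar_minus_Qprime_eq_kron
  by (simp_all add: Ibar_eq_kron kron_mult centering_mixing_matrix[OF assms]
      mixing_centering_matrix[OF assms])

lemma norm_Ibar_le: "norm (Ibar *v v) \<le> norm v"
proof -
  have "norm (kron centering_matrix (mat 1) *v v) \<le> 1 * norm v"
    by (rule norm_kron_mat_one_le) (simp_all add: norm_centering_matrix_le)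
  then show ?thesis by (simp add: Ibar_eq_kron)
qed

section \<open>Powers of the block matrix\<close>

definition jblock :: "real^'m^'m \<Rightarrow> real^'m^'m \<Rightarrow> real^(3 \<times> 'm)^(3 \<times> 'm)" where
  "jblock M P = (\<chi> r c. let a = fst r; x = snd r; b = fst c; y = snd c in
     if a = 0 \<and> b = 0 then M $ x $ y
     else if a = 0 \<and> b = 2 then - M $ x $ y
     else if a = 1 \<and> b = 1 then M $ x $ y
     else if a = 1 \<and> b = 2 then - P $ x $ y
     else if a = 2 \<and> b = 2 then M $ x $ y
     else 0)"

lemma Jgamma_eq_jblock: "Jgamma Q \<gamma> = jblock (Ibar - \<gamma> *\<^sub>R Qprime Q) Ibar"
  by (simp add: Jgamma_def jblock_def Let_def)

definition block :: "3 \<Rightarrow> real^(3 \<times> 'm) \<Rightarrow> real^'m" where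
  "block a w = (\<chi> x. w $ (a, x))"

lemma sum_UNIV_3: "sum f (UNIV :: 3 set) = f 0 + f 1 + f 2"
proof -
  have three: "(3 :: 3) = 0" by simp
  show ?thesis using sum_3[of f] unfolding three by (simp add: ac_simps)
qed

lemma norm_sq_eq_blocks:
  "(norm w)\<^sup>2 = (norm (block 0 w))\<^sup>2 + (norm (block 1 w))\<^sup>2 + (norm (block 2 w))\<^sup>2"
  by (simp add: power2_norm_eq_inner inner_vec_def block_def sum_UNIV_prod sum_UNIV_3)

lemma jblock_mult_blocks:
  "block 0 (jblock M P *v w) = M *v block 0 w - M *v block 2 w"
  "block 1 (jblock M P *v w) = M *v block 1 w - P *v block 2 w"
  "block 2 (jblock M P *v w) = M *v block 2 w"
  by (simp_all add: vec_eq_iff block_def jblock_def Let_def matrix_vector_mult_def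
      sum_UNIV_prod sum_UNIV_3 sum_subtractf sum_negf)

lemma matpow_Suc: "matpow A (Suc k) = A ** matpow A k"
  by (simp add: matpow_def)

lemma matpow_Suc_right: "matpow A (Suc k) = matpow A k ** A"
  by (induction k) (simp_all add: matpow_Suc matpow_def matrix_mul_assoc)

lemma matpow_Suc_mult: "A *v (matpow A k *v x) = matpow A (Suc k) *v x"
  by (simp add: matpow_Suc matrix_vector_mul_assoc)

lemma matpow_absorbs:
  assumes "P ** M = M" "M ** P = M"
  shows "P *v (matpow M (Suc k) *v x) = matpow M (Suc k) *v x"
    and "matpow M (Suc k) *v (P *v x) = matpow M (Suc k) *v x"
proof -
  show "P *v (matpow M (Suc k) *v x) = matpow M (Suc k) *v x"
    by (simp add: matrix_vector_mul_assoc matpow_Suc matrix_mul_assoc assms(1))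
  have "matpow M (Suc k) ** P = matpow M (Suc k)"
    by (metis matpow_Suc_right matrix_mul_assoc assms(2))
  then show "matpow M (Suc k) *v (P *v x) = matpow M (Suc k) *v x"
    by (simp add: matrix_vector_mul_assoc)
qed

lemma norm_matpow_le:
  assumes "\<And>v. norm (M *v v) \<le> \<rho> * norm v" "0 \<le> \<rho>"
  shows "norm (matpow M k *v v) \<le> \<rho> ^ k * norm v"
proof (induction k)
  case (Suc k)
  have "norm (matpow M (Suc k) *v v) \<le> \<rho> * norm (matpow M k *v v)"
    using assms(1) by (simp flip: matpow_Suc_mult)
  also have "\<dots> \<le> \<rho> * (\<rho> ^ k * norm v)" using Suc assms(2) by (rule mult_left_mono)
  finally show ?case by (simp add: mult.assoc)
qed (simp add: matpow_def)

lemma matpow_jblock_blocks: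
  fixes M P :: "real^'m^'m"
  assumes "P ** M = M" "M ** P = M"
  shows "block 0 (matpow (jblock M P) (Suc k) *v w)
        = matpow M (Suc k) *v block 0 w - real (Suc k) *\<^sub>R (matpow M (Suc k) *v block 2 w)
      \<and> block 1 (matpow (jblock M P) (Suc k) *v w)
        = matpow M (Suc k) *v block 1 w - real (Suc k) *\<^sub>R (matpow M k *v (P *v block 2 w))
      \<and> block 2 (matpow (jblock M P) (Suc k) *v w) = matpow M (Suc k) *v block 2 w"
proof (induction k)
  case 0
  show ?case by (simp add: matpow_def jblock_mult_blocks)
next
  case (Suc k)
  define u where "u = matpow (jblock M P) (Suc k) *v w"
  have u: "matpow (jblock M P) (Suc (Suc k)) *v w = jblock M P *v u"
    by (simp only: u_def matpow_Suc_mult)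
  from Suc.IH obtain b0: "block 0 u = matpow M (Suc k) *v block 0 w
        - real (Suc k) *\<^sub>R (matpow M (Suc k) *v block 2 w)"
    and b1: "block 1 u = matpow M (Suc k) *v block 1 w
        - real (Suc k) *\<^sub>R (matpow M k *v (P *v block 2 w))"
    and b2: "block 2 u = matpow M (Suc k) *v block 2 w"
    by (simp add: u_def)
  show ?case unfolding u jblock_mult_blocks b0 b1 b2
    by (simp add: matpow_Suc_mult matpow_absorbs[OF assms] algebra_simps) (simp add: vec_eq_iff)
qed

lemma sum_squares_shifted_le:
  fixes x y z T :: real
  shows "(x + T * y)\<^sup>2 + (z + T * y)\<^sup>2 + y\<^sup>2 \<le> (3 + 2 * T\<^sup>2) * (x\<^sup>2 + y\<^sup>2 + z\<^sup>2)"
proof -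
  have "2 * (T * x) * y \<le> (T * x)\<^sup>2 + y\<^sup>2" "2 * (T * z) * y \<le> (T * z)\<^sup>2 + y\<^sup>2"
    by (simp_all add: sum_squares_bound)
  then have "(x + T * y)\<^sup>2 + (z + T * y)\<^sup>2 + y\<^sup>2 \<le> (1 + T\<^sup>2) * (x\<^sup>2 + z\<^sup>2) + (3 + 2 * T\<^sup>2) * y\<^sup>2"
    by (simp add: power2_eq_square algebra_simps)
  also have "\<dots> \<le> (3 + 2 * T\<^sup>2) * (x\<^sup>2 + z\<^sup>2) + (3 + 2 * T\<^sup>2) * y\<^sup>2"
    by (intro add_mono mult_right_mono) auto
  also have "\<dots> = (3 + 2 * T\<^sup>2) * (x\<^sup>2 + y\<^sup>2 + z\<^sup>2)" by (simp add: algebra_simps)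
  finally show ?thesis .
qed

lemma norm_diff_scaleR_le: "0 \<le> T \<Longrightarrow> norm (a - T *\<^sub>R b) \<le> norm a + T * norm b"
  using norm_triangle_ineq4[of a "T *\<^sub>R b"] by simp

lemma norm_matpow_jblock_le:
  fixes M P :: "real^'m^'m"
  assumes PM: "P ** M = M" "M ** P = M"
    and M: "\<And>v. norm (M *v v) \<le> \<rho> * norm v" and P: "\<And>v. norm (P *v v) \<le> norm v"
    and \<rho>: "0 \<le> \<rho>" "\<rho> \<le> 1"
  shows "(norm (matpow (jblock M P) (Suc k) *v w))\<^sup>2
    \<le> (3 + 2 * (real (Suc k))\<^sup>2) * (\<rho> ^ k)\<^sup>2 * (norm w)\<^sup>2"
proof -
  define T where "T = real (Suc k)"
  define u where "u = matpow (jblock M P) (Suc k) *v w"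
  define x y z where "x = norm (block 0 w)" and "y = norm (block 2 w)" and "z = norm (block 1 w)"
  have "\<rho> ^ Suc k \<le> \<rho> ^ k" using \<rho> by (simp add: mult_left_le_one_le)
  then have pow: "norm (matpow M (Suc k) *v v) \<le> \<rho> ^ k * norm v" for v
    using norm_matpow_le[OF M \<rho>(1), of "Suc k" v] mult_right_mono[of _ _ "norm v"] by force
  have powP: "norm (matpow M k *v (P *v v)) \<le> \<rho> ^ k * norm v" for v
    using norm_matpow_le[OF M \<rho>(1), of k "P *v v"] mult_left_mono[OF P, of "\<rho> ^ k" v] \<rho>(1)
    by simp
  have T: "0 \<le> T" by (simp add: T_def)
  have "norm (block 0 u) \<le> norm (matpow M (Suc k) *v block 0 w) + T * norm (matpow M (Suc k) *v block 2 w)"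
    unfolding u_def matpow_jblock_blocks[OF PM, where k = k, THEN conjunct1, folded T_def] by (rule norm_diff_scaleR_le[OF T])
  also have "\<dots> \<le> \<rho> ^ k * x + T * (\<rho> ^ k * y)"
    unfolding x_def y_def by (intro add_mono mult_left_mono pow T)
  finally have n0: "norm (block 0 u) \<le> \<rho> ^ k * (x + T * y)" by (simp add: algebra_simps)
  have "norm (block 1 u) \<le> norm (matpow M (Suc k) *v block 1 w) + T * norm (matpow M k *v (P *v block 2 w))"
    unfolding u_def matpow_jblock_blocks[OF PM, where k = k, THEN conjunct2, THEN conjunct1, folded T_def]
    by (rule norm_diff_scaleR_le[OF T])
  also have "\<dots> \<le> \<rho> ^ k * z + T * (\<rho> ^ k * y)"
    unfolding z_def y_def by (intro add_mono mult_left_mono pow powP T)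
  finally have n1: "norm (block 1 u) \<le> \<rho> ^ k * (z + T * y)" by (simp add: algebra_simps)
  have n2: "norm (block 2 u) \<le> \<rho> ^ k * y"
    using pow by (simp add: u_def matpow_jblock_blocks[OF PM] y_def)
  from n0 n1 n2 have "(norm u)\<^sup>2 \<le> (\<rho> ^ k * (x + T * y))\<^sup>2 + (\<rho> ^ k * (z + T * y))\<^sup>2 + (\<rho> ^ k * y)\<^sup>2"
    unfolding norm_sq_eq_blocks[of u] by (intro add_mono power_mono) auto
  also have "\<dots> = (\<rho> ^ k)\<^sup>2 * ((x + T * y)\<^sup>2 + (z + T * y)\<^sup>2 + y\<^sup>2)"
    by (simp only: power_mult_distrib distrib_left[symmetric])
  also have "\<dots> \<le> (\<rho> ^ k)\<^sup>2 * ((3 + 2 * T\<^sup>2) * (x\<^sup>2 + y\<^sup>2 + z\<^sup>2))"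
    by (rule mult_left_mono[OF sum_squares_shifted_le]) simp
  also have "x\<^sup>2 + y\<^sup>2 + z\<^sup>2 = (norm w)\<^sup>2" by (simp add: x_def y_def z_def norm_sq_eq_blocks[of w])
  finally show ?thesis by (simp add: u_def T_def algebra_simps)
qed

section \<open>The choice of the number of steps\<close>

lemma ln_le_half_self:
  fixes x :: real
  assumes "0 < x"
  shows "ln x \<le> x / 2"
proof -
  have "ln x = 2 * ln (sqrt x)" using assms by (simp add: ln_sqrt)
  also have "\<dots> \<le> 2 * (sqrt x - 1)" using ln_le_minus_one[of "sqrt x"] assms by simp
  also have "\<dots> \<le> x / 2"
    using assms zero_le_power2[of "sqrt x - 2"] by (simp add: power2_diff)
  finally show ?thesis .
qed

lemma ln_two_mult_le:
  fixes a :: real and \<tau> :: nat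
  assumes a: "0 < a" "a < 1/2" and \<tau>: "2 / a * (4 * ln (2 / a)) \<le> real \<tau>"
  shows "2 \<le> \<tau>" and "ln (2 * real \<tau>) \<le> a * real \<tau> / 2 + ln 4"
proof -
  define L where "L = ln (2 / a)"
  define X where "X = a * real \<tau> / 2"
  have "1 \<le> ln (4 :: real)"
    using exp_le ln_le_cancel_iff[of "exp 1" 4] by simp
  moreover have "ln 4 \<le> L" unfolding L_def using a by (subst ln_le_cancel_iff) (auto simp: field_simps)
  ultimately have L: "1 \<le> L" by linarith
  have "4 * L \<le> X" using \<tau> a by (simp add: X_def L_def field_simps)
  then have X: "0 < X" using L by linarith
  have "4 * 4 \<le> 2 / a * (4 * L)" using a L by (intro mult_mono) (auto simp: field_simps)
  then show "2 \<le> \<tau>" using \<tau> by (simp add: L_def)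
  have "2 * real \<tau> = 4 * X * (1 / a)" using a by (simp add: X_def)
  then have "ln (2 * real \<tau>) = ln 4 + ln X + (L - ln 2)"
    using X a by (simp add: ln_mult ln_div L_def)
  also have "\<dots> \<le> ln 4 + X / 2 + X / 4"
    using ln_le_half_self[OF X] \<open>4 * L \<le> X\<close> ln_ge_zero[of 2] by linarith
  finally show "ln (2 * real \<tau>) \<le> a * real \<tau> / 2 + ln 4"
    using X by (simp add: X_def)
qed

lemma schedule_decay:
  fixes a \<delta> :: real and \<tau> :: nat
  assumes a: "0 < a" "a < 1/2" and \<delta>: "0 < \<delta>"
    and \<tau>: "2 / a * max (4 * ln (2 / a)) (a - ln (sqrt \<delta> / 4)) \<le> real \<tau>"
  shows "2 \<le> \<tau>" and "2 * real \<tau> * (1 - a) ^ (\<tau> - 1) \<le> sqrt \<delta>"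
proof -
  have a2: "0 \<le> 2 / a" using a by simp
  have \<tau>1: "2 / a * (4 * ln (2 / a)) \<le> real \<tau>"
    using order_trans[OF mult_left_mono[OF max.cobounded1 a2] \<tau>] .
  have \<tau>2: "2 / a * (a - ln (sqrt \<delta> / 4)) \<le> real \<tau>"
    using order_trans[OF mult_left_mono[OF max.cobounded2 a2] \<tau>] .
  show "2 \<le> \<tau>" by (rule ln_two_mult_le(1)[OF a \<tau>1])
  have "(1 - a) ^ (\<tau> - 1) \<le> exp (- a) ^ (\<tau> - 1)"
    using a exp_ge_add_one_self[of "- a"] by (intro power_mono) auto
  also have "\<dots> = exp (a - a * real \<tau>)"
    using \<open>2 \<le> \<tau>\<close> by (simp add: algebra_simps flip: exp_of_nat_mult)
  finally have "2 * real \<tau> * (1 - a) ^ (\<tau> - 1) \<le> exp (ln (2 * real \<tau>)) * exp (a - a * real \<tau>)"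
    using \<open>2 \<le> \<tau>\<close> by simp
  also have "\<dots> \<le> exp (ln 4 - a * real \<tau> / 2 + a)"
    using ln_two_mult_le(2)[OF a \<tau>1] by (simp flip: exp_add)
  also have "\<dots> \<le> exp (ln (sqrt \<delta>))"
    unfolding exp_le_cancel_iff using \<tau>2 a \<delta> by (simp add: ln_div field_simps)
  finally show "2 * real \<tau> * (1 - a) ^ (\<tau> - 1) \<le> sqrt \<delta>" using \<delta> by simp
qed

lemma schedule_bound:
  fixes a \<delta> :: real and \<tau> :: nat
  assumes a: "0 < a" "a < 1/2" and \<delta>: "0 < \<delta>"
    and \<tau>: "of_int \<lceil>2 / a * max (4 * ln (2 / a)) (a - ln (sqrt \<delta> / 4))\<rceil> \<le> real \<tau>"
  shows "2 \<le> \<tau>" and "(3 + 2 * (real \<tau>)\<^sup>2) * ((1 - a) ^ (\<tau> - 1))\<^sup>2 \<le> \<delta>"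
proof -
  have \<tau>': "2 / a * max (4 * ln (2 / a)) (a - ln (sqrt \<delta> / 4)) \<le> real \<tau>"
    using le_of_int_ceiling \<tau> by (rule order_trans)
  show "2 \<le> \<tau>" by (rule schedule_decay(1)[OF a \<delta> \<tau>'])
  then have "2 * 2 \<le> real \<tau> * real \<tau>" by (intro mult_mono) auto
  then have "3 + 2 * (real \<tau>)\<^sup>2 \<le> (2 * real \<tau>)\<^sup>2" by (simp add: power2_eq_square)
  then have "(3 + 2 * (real \<tau>)\<^sup>2) * ((1 - a) ^ (\<tau> - 1))\<^sup>2 \<le> (2 * real \<tau> * (1 - a) ^ (\<tau> - 1))\<^sup>2"
    by (simp add: power_mult_distrib mult_right_mono)
  also have "\<dots> \<le> (sqrt \<delta>)\<^sup>2"
    using schedule_decay(2)[OF a \<delta> \<tau>'] a by (intro power_mono) auto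
  finally show "(3 + 2 * (real \<tau>)\<^sup>2) * ((1 - a) ^ (\<tau> - 1))\<^sup>2 \<le> \<delta>" using \<delta> by simp
qed

lemma onorm_square_le:
  assumes f: "bounded_linear f" and c: "0 \<le> c" and bound: "\<And>x. (norm (f x))\<^sup>2 \<le> c * (norm x)\<^sup>2"
  shows "(onorm f)\<^sup>2 \<le> c"
proof -
  have "norm (f x) \<le> sqrt c * norm x" for x
    using real_le_rsqrt[OF bound[of x]] by (simp add: real_sqrt_mult)
  then have "onorm f \<le> sqrt c" using c by (intro onorm_bound) auto
  then have "(onorm f)\<^sup>2 \<le> (sqrt c)\<^sup>2" by (rule power_mono[OF _ onorm_pos_le[OF f]])
  then show ?thesis using c by simp
qed

theorem lemma2:
  fixes Q :: "real^'n^'n" and lam :: "nat \<Rightarrow> real"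
    and \<delta> \<gamma> :: real and \<tau> :: nat
  assumes n2: "CARD('n) \<ge> 2"
    and sym: "transpose Q = Q"
    and ds: "doubly_stochastic Q"
    and eig: "charpoly Q = (\<Prod>i<CARD('n). [:- lam i, 1:])"
    and l1: "lam 0 = 1" and l12: "lam 0 > lam 1"
    and lsorted: "\<And>i j. 1 \<le> i \<Longrightarrow> i \<le> j \<Longrightarrow> j < CARD('n) \<Longrightarrow> lam j \<le> lam i"
    and lmin: "lam (CARD('n) - 1) > -1"
    and \<delta>: "0 < \<delta>" "\<delta> < 1"
    and \<gamma>: "0 < \<gamma>" "\<gamma> < 1/4"
    and \<tau>: "real \<tau> \<ge> of_int \<lceil>2 / (\<gamma> * (1 - lam 1)) *
               max (4 * ln (2 / (\<gamma> * (1 - lam 1))))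
                   (\<gamma> * (1 - lam 1) - ln (sqrt \<delta> / 4))\<rceil>"
  shows "(onorm (\<lambda>x. matpow (Jgamma Q \<gamma> :: real^(3 \<times> ('n \<times> 'd::finite))^(3 \<times> ('n \<times> 'd))) \<tau> *v x))\<^sup>2 \<le> \<delta>
         \<and> \<delta> < 1"
proof -
  define a where "a = \<gamma> * (1 - lam 1)"
  have lam1: "-1 < lam 1" "lam 1 < 1"
    using lsorted[of 1 "CARD('n) - 1"] n2 lmin l1 l12 by force+
  have a: "0 < a" "a < 1/2"
    unfolding a_def using \<gamma> lam1 mult_strict_mono[of \<gamma> "1/4" "1 - lam 1" 2] by auto
  have sched: "2 \<le> \<tau>" "(3 + 2 * (real \<tau>)\<^sup>2) * ((1 - a) ^ (\<tau> - 1))\<^sup>2 \<le> \<delta>"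
    using schedule_bound[OF a \<delta>(1)] \<tau> by (simp_all add: a_def)
  then obtain k where k: "\<tau> = Suc k" by (metis Suc_le_D numeral_2_eq_2)
  let ?M = "Ibar - \<gamma> *\<^sub>R Qprime Q :: real^('n \<times> 'd)^('n \<times> 'd)"
  have M: "norm (?M *v v) \<le> (1 - a) * norm v" for v
    unfolding Ibar_minus_Qprime_eq_kron a_def
    by (intro norm_kron_mat_one_le norm_mixing_matrix_le[OF n2 sym ds eig l1 l12 lsorted])
      (use \<gamma> lam1 a in \<open>auto simp: a_def\<close>)
  have "(norm (matpow (Jgamma Q \<gamma>) \<tau> *v w))\<^sup>2 \<le> \<delta> * (norm w)\<^sup>2"
    for w :: "real^(3 \<times> ('n \<times> 'd))"
  proof -
    have "(norm (matpow (Jgamma Q \<gamma>) \<tau> *v w))\<^sup>2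
        \<le> (3 + 2 * (real \<tau>)\<^sup>2) * ((1 - a) ^ (\<tau> - 1))\<^sup>2 * (norm w)\<^sup>2"
      using norm_matpow_jblock_le[OF Ibar_absorbs_Ibar_minus_Qprime[OF ds] M norm_Ibar_le, of k w] a
      unfolding Jgamma_eq_jblock k by simp
    also have "\<dots> \<le> \<delta> * (norm w)\<^sup>2" using sched(2) by (rule mult_right_mono) simp
    finally show ?thesis .
  qed
  then show ?thesis using \<delta> by (simp add: onorm_square_le)
qed

end
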